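(* Let $0<\delta<1$, $0<\varepsilon<1/7$, $2<\alpha<\min(\frac{2}{1-\delta},3)$ and $0<\rho<\min\!\left(\frac{1-\delta}{2},\frac{2-\alpha(1-\delta)}{4}\right)$ be constants, let $p=n^{\delta-1}$, let $H$ be a balanced graph on $m=n^{\rho}$ vertices with average degree $\alpha$ having an independent set of size $k'$, and let $k'\le k\le n-m$. Let $f$ be an arbitrary function mapping $n$-vertex graphs to $\{0,1\}$. Let $p_A=\Pr[f(G)=1]$ for $G\sim A_HG(n,p,k)$ and $p_H=\Pr[f(G)=1]$ for $G\sim G_H(n,p,k)$. Then for every constant $\beta\in[0,1)$ and all sufficiently large $n$, $p_H\ge\beta\left(p_A-\frac{4\varepsilon}{(1-\beta)^2}\right)$.
   Context: A graph with average degree $\alpha$ is balanced if every induced subgraph has average degree at most $\alpha$. $G(n,p)$ is the Erdős–Rényi random graph on vertex set $[n]$. Let $H$ have vertex set $[m]$, $m$ dividing $n$; partition $[n]$ into parts $P_i=\{(i-1)\frac nm+1,\dots,i\frac nm\}$, $1\le i\le m$. A set $S=\{v_1,\dots,v_m\}$ with $v_i\in P_i$ obeys the partition; it is an induced copy of $H$ obeying the partition in a graph $F$ if $i\mapsto v_i$ is an isomorphism from $H$ onto $F[S]$. Distribution $G_H(n,p,k)$: sample $G'\sim G(n,p)$; choose a uniformly random $M=\{v_1,\dots,v_m\}$ obeying the partition and replace $G'[M]$ by $H$ (vertex $i$ placed at $v_i$), giving $G_H$; among the vertices with no neighbor in $M$ choose a uniformly random set $I'$ of size $k-k'$ and delete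 all edges inside $I'$; if there are fewer than $k-k'$ such vertices, instead delete all edges inside a uniformly random set of $k$ vertices of $G_H$. Distribution $A_HG(n,p,k)$: sample $G'\sim G(n,p)$; choose uniformly at random one induced copy $S$ of $H$ in $G'$ obeying the partition; among the vertices with no neighbor in $S$ choose a uniformly random set of size $k-k'$ and delete all edges inside it; if no such copy exists or there are fewer than $k-k'$ such vertices, instead delete all edges inside a uniformly random set of $k$ vertices of $G'$. *)

theory Defs
  imports "HOL-Probability.Probability"
begin

text \<open>Simple graphs on vertex set [n] = {1..n} are represented by their edge sets,
  sets of 2-element subsets of {1..n}.\<close>

definition all_edges :: "nat \<Rightarrow> nat set set" where
  "all_edges n = {e. \<exists>u v. u \<in> {1..n} \<and> v \<in> {1..n} \<and> u \<noteq> v \<and> e = {u, v}}"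

definition gnp :: "nat \<Rightarrow> real \<Rightarrow> nat set set pmf" where
  "gnp n p = map_pmf (\<lambda>b. {e \<in> all_edges n. b e})
                     (Pi_pmf (all_edges n) False (\<lambda>_. bernoulli_pmf p))"

definition avg_deg :: "nat set set \<Rightarrow> nat set \<Rightarrow> real" where
  "avg_deg E S = 2 * real (card {e \<in> E. e \<subseteq> S}) / real (card S)"

definition balanced_graph :: "nat \<Rightarrow> nat set set \<Rightarrow> real \<Rightarrow> bool" where
  "balanced_graph m EH \<alpha> \<longleftrightarrow> EH \<subseteq> all_edges m \<and> avg_deg EH {1..m} = \<alpha> \<and>
     (\<forall>S. S \<subseteq> {1..m} \<and> S \<noteq> {} \<longrightarrow> avg_deg EH S \<le> \<alpha>)"

definition has_indep_set :: "nat \<Rightarrow> nat set set \<Rightarrow> nat \<Rightarrow> bool" where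
  "has_indep_set m EH k' \<longleftrightarrow> (\<exists>I. I \<subseteq> {1..m} \<and> card I = k' \<and> (\<forall>e \<in> EH. \<not> e \<subseteq> I))"

definition part :: "nat \<Rightarrow> nat \<Rightarrow> nat \<Rightarrow> nat set" where
  "part n m i = {(i - 1) * (n div m) + 1 .. i * (n div m)}"

text \<open>Tuples (v_1,...,v_m) with v_i in P_i (sets obeying the partition, with the map i -> v_i).\<close>
definition obeying :: "nat \<Rightarrow> nat \<Rightarrow> (nat \<Rightarrow> nat) set" where
  "obeying n m = PiE {1..m} (part n m)"

definition plant :: "nat \<Rightarrow> nat set set \<Rightarrow> (nat \<Rightarrow> nat) \<Rightarrow> nat set set \<Rightarrow> nat set set" where
  "plant m EH vs E = {e \<in> E. \<not> e \<subseteq> vs ` {1..m}} \<union> {{vs i, vs j} | i j. {i, j} \<in> EH}"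

definition del_inside :: "nat set set \<Rightarrow> nat set \<Rightarrow> nat set set" where
  "del_inside E I = {e \<in> E. \<not> e \<subseteq> I}"

definition nonadj :: "nat \<Rightarrow> nat set set \<Rightarrow> nat set \<Rightarrow> nat set" where
  "nonadj n E M = {u \<in> {1..n}. \<forall>w \<in> M. {u, w} \<notin> E}"

definition ksets :: "nat set \<Rightarrow> nat \<Rightarrow> nat set set" where
  "ksets V k = {I. I \<subseteq> V \<and> card I = k}"

definition finish :: "nat \<Rightarrow> nat \<Rightarrow> nat \<Rightarrow> nat set set \<Rightarrow> nat set \<Rightarrow> nat set set pmf" where
  "finish n k k' E M =
     (if k - k' \<le> card (nonadj n E M)
      then map_pmf (del_inside E) (pmf_of_set (ksets (nonadj n E M) (k - k')))
      else map_pmf (del_inside E) (pmf_of_set (ksets {1..n} k)))"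

definition GH_dist :: "nat \<Rightarrow> real \<Rightarrow> nat \<Rightarrow> nat set set \<Rightarrow> nat \<Rightarrow> nat \<Rightarrow> nat set set pmf" where
  "GH_dist n p m EH k k' =
     bind_pmf (gnp n p) (\<lambda>E'.
     bind_pmf (pmf_of_set (obeying n m)) (\<lambda>vs.
       finish n k k' (plant m EH vs E') (vs ` {1..m})))"

definition induced_copies :: "nat \<Rightarrow> nat \<Rightarrow> nat set set \<Rightarrow> nat set set \<Rightarrow> (nat \<Rightarrow> nat) set" where
  "induced_copies n m EH E = {vs \<in> obeying n m.
     \<forall>i \<in> {1..m}. \<forall>j \<in> {1..m}. i \<noteq> j \<longrightarrow> ({i, j} \<in> EH \<longleftrightarrow> {vs i, vs j} \<in> E)}"

definition AHG_dist :: "nat \<Rightarrow> real \<Rightarrow> nat \<Rightarrow> nat set set \<Rightarrow> nat \<Rightarrow> nat \<Rightarrow> nat set set pmf" where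
  "AHG_dist n p m EH k k' =
     bind_pmf (gnp n p) (\<lambda>E'.
       if induced_copies n m EH E' = {}
       then map_pmf (del_inside E') (pmf_of_set (ksets {1..n} k))
       else bind_pmf (pmf_of_set (induced_copies n m EH E')) (\<lambda>vs.
              finish n k k' E' (vs ` {1..m})))"

end

theory Submission
  imports Defs
begin

(*
  Let X(G) be the number of induced copies of H in G ~ G(n,p) obeying the partition, with
  mean mu = (n/m)^m * p^e(H) * (1 - p)^(binom(m,2) - e(H)). Planting H at a uniformly random
  position is the same as size-biasing G(n,p) by X: for every event A,
  Pr_{G_H}[A] = E[X * Psi_A] / mu, where Psi_A(G') is the probability of A under A_H G
  conditioned on the underlying G(n,p) sample G'.  Two positions agreeing on t parts share
  at most alpha*t/2 edges of H (H is balanced) and at most t^2 pairs, so by the choice of rho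
  E[X^2] <= (1 + 4 epsilon) mu^2.  Splitting according to whether X >= beta*mu, Chebyshev
  gives E[X * Psi_A] / mu >= beta * (E[Psi_A] - 4 epsilon / (1 - beta)^2).
*)

definition bernoulli_weight :: "real \<Rightarrow> 'a set \<Rightarrow> 'a set \<Rightarrow> real" where
  "bernoulli_weight p X E = p ^ card E * (1 - p) ^ card (X - E)"

lemma bernoulli_weight_nonneg: "0 \<le> p \<Longrightarrow> p \<le> 1 \<Longrightarrow> 0 \<le> bernoulli_weight p X E"
  unfolding bernoulli_weight_def by simp

lemma sum_Pow_power_card:
  fixes a b :: "'b :: comm_semiring_1"
  assumes "finite A"
  shows "(\<Sum>T\<in>Pow A. a ^ card T * b ^ card (A - T)) = (a + b) ^ card A"
proof -
  have "(\<Sum>T\<in>Pow A. a ^ card T * b ^ card (A - T)) = (\<Sum>T\<in>Pow A. (\<Prod>x\<in>T. a) * (\<Prod>x\<in>A - T. b))"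
    by simp
  also have "\<dots> = (\<Prod>x\<in>A. a + b)" using prod_add[OF assms, of "\<lambda>_. a" "\<lambda>_. b"] by simp
  finally show ?thesis by simp
qed

lemma sum_bernoulli_weight: "finite X \<Longrightarrow> (\<Sum>E\<in>Pow X. bernoulli_weight p X E) = 1"
  unfolding bernoulli_weight_def by (simp add: sum_Pow_power_card)

lemma bernoulli_weight_Un:
  assumes "finite X" "D \<subseteq> X" "S \<subseteq> D" "R \<subseteq> X - D"
  shows "bernoulli_weight p X (S \<union> R) = bernoulli_weight p D S * bernoulli_weight p (X - D) R"
proof -
  have fin: "finite D" "finite S" "finite R" "finite (X - D)"
    using assms by (auto intro: finite_subset)
  have "X - (S \<union> R) = (D - S) \<union> ((X - D) - R)" "(D - S) \<inter> ((X - D) - R) = {}"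
    using assms by auto
  then have "card (X - (S \<union> R)) = card (D - S) + card ((X - D) - R)"
    using fin by (simp add: card_Un_disjoint)
  moreover have "card (S \<union> R) = card S + card R"
    using assms fin by (intro card_Un_disjoint) auto
  ultimately show ?thesis
    unfolding bernoulli_weight_def by (simp add: power_add mult_ac)
qed

lemma sum_bernoulli_weight_restrict:
  fixes h :: "'a set \<Rightarrow> real"
  assumes "finite X" "D \<subseteq> X" "A \<subseteq> D"
  shows "(\<Sum>E\<in>Pow X. bernoulli_weight p X E * (if E \<inter> D = A then h E else 0))
       = bernoulli_weight p D A * (\<Sum>R\<in>Pow (X - D). bernoulli_weight p (X - D) R * h (A \<union> R))"
proof -
  have bij: "bij_betw (\<lambda>(S, R). S \<union> R) (Pow D \<times> Pow (X - D)) (Pow X)"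
    by (rule bij_betwI[where g = "\<lambda>E. (E \<inter> D, E - D)"]) (use assms(2) in auto)
  have "(\<Sum>E\<in>Pow X. bernoulli_weight p X E * (if E \<inter> D = A then h E else 0))
      = (\<Sum>(S, R)\<in>Pow D \<times> Pow (X - D).
           bernoulli_weight p X (S \<union> R) * (if (S \<union> R) \<inter> D = A then h (S \<union> R) else 0))"
    using sum.reindex_bij_betw[OF bij, of "\<lambda>E. bernoulli_weight p X E * (if E \<inter> D = A then h E else 0)"]
    by (simp add: split_def cong: if_cong)
  also have "\<dots> = (\<Sum>(S, R)\<in>Pow D \<times> Pow (X - D). if S = A
        then bernoulli_weight p D A * (bernoulli_weight p (X - D) R * h (A \<union> R)) else 0)"
    using assms by (intro sum.cong refl) (auto simp: bernoulli_weight_Un Int_absorb2 Un_Int_distrib2)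
  also have "\<dots> = (\<Sum>S\<in>Pow D. if S = A then bernoulli_weight p D A *
        (\<Sum>R\<in>Pow (X - D). bernoulli_weight p (X - D) R * h (A \<union> R)) else 0)"
    unfolding sum.cartesian_product[symmetric] by (intro sum.cong refl) (simp add: sum_distrib_left)
  also have "\<dots> = bernoulli_weight p D A * (\<Sum>R\<in>Pow (X - D). bernoulli_weight p (X - D) R * h (A \<union> R))"
    using assms by (simp add: sum.delta' finite_subset)
  finally show ?thesis .
qed

lemma sum_bernoulli_weight_resample:
  fixes h :: "'a set \<Rightarrow> real"
  assumes "finite X" "D \<subseteq> X" "A \<subseteq> D"
  shows "(\<Sum>E\<in>Pow X. bernoulli_weight p X E * h ((E - D) \<union> A))
       = (\<Sum>R\<in>Pow (X - D). bernoulli_weight p (X - D) R * h (A \<union> R))"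
proof -
  let ?K = "\<Sum>R\<in>Pow (X - D). bernoulli_weight p (X - D) R * h (A \<union> R)"
  let ?g = "\<lambda>S E. bernoulli_weight p X E * (if E \<inter> D = S then h ((E - D) \<union> A) else 0)"
  have fin_D: "finite D" using assms(1,2) by (rule finite_subset[rotated])
  have trace: "(\<Sum>E\<in>Pow X. ?g S E) = bernoulli_weight p D S * ?K" if "S \<in> Pow D" for S
  proof -
    have "(\<Sum>E\<in>Pow X. ?g S E)
        = bernoulli_weight p D S * (\<Sum>R\<in>Pow (X - D). bernoulli_weight p (X - D) R * h (((S \<union> R) - D) \<union> A))"
      using that by (intro sum_bernoulli_weight_restrict[OF assms(1,2)]) auto
    also have "\<dots> = bernoulli_weight p D S * ?K"
      using that by (intro arg_cong2[where f = "(*)"] sum.cong refl) (auto intro!: arg_cong[where f = h])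
    finally show ?thesis .
  qed
  have "(\<Sum>E\<in>Pow X. bernoulli_weight p X E * h ((E - D) \<union> A)) = (\<Sum>E\<in>Pow X. \<Sum>S\<in>Pow D. ?g S E)"
    using fin_D by (intro sum.cong refl) (subst sum_distrib_left[symmetric], simp add: sum.delta')
  also have "\<dots> = (\<Sum>S\<in>Pow D. \<Sum>E\<in>Pow X. ?g S E)" by (rule sum.swap)
  also have "\<dots> = (\<Sum>S\<in>Pow D. bernoulli_weight p D S * ?K)" by (rule sum.cong[OF refl trace])
  also have "\<dots> = ?K" using fin_D by (simp add: sum_distrib_right[symmetric] sum_bernoulli_weight)
  finally show ?thesis .
qed

lemma bernoulli_weight_Un_le:
  assumes "finite D" "finite D'" "A \<subseteq> D" "A' \<subseteq> D'" "0 \<le> p" "p \<le> 1"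
  shows "bernoulli_weight p (D \<union> D') (A \<union> A') * (p ^ card (A \<inter> A') * (1 - p) ^ card (D \<inter> D'))
       \<le> bernoulli_weight p D A * bernoulli_weight p D' A'"
proof -
  have fin: "finite A" "finite A'" using assms by (auto intro: finite_subset)
  have p_exp: "card (A \<union> A') + card (A \<inter> A') = card A + card A'"
    using card_Un_Int[OF fin] by simp
  have sub: "A \<union> A' \<subseteq> D \<union> D'" using assms by auto
  have "card ((D \<union> D') - (A \<union> A')) + card (D \<inter> D') = card D + card D' - card (A \<union> A')"
    using card_Diff_subset[OF _ sub] card_mono[OF _ sub] card_Un_Int[OF assms(1,2)] assms(1,2) fin
    by simp
  also have "\<dots> \<ge> card (D - A) + card (D' - A')"
    using assms p_exp card_mono[OF assms(1,3)] card_mono[OF assms(2,4)]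
    by (simp add: card_Diff_subset fin)
  finally have "(1 - p) ^ (card ((D \<union> D') - (A \<union> A')) + card (D \<inter> D'))
      \<le> (1 - p) ^ (card (D - A) + card (D' - A'))"
    using assms by (intro power_decreasing) auto
  then have "p ^ (card (A \<union> A') + card (A \<inter> A'))
        * (1 - p) ^ (card ((D \<union> D') - (A \<union> A')) + card (D \<inter> D'))
      \<le> p ^ (card A + card A') * (1 - p) ^ (card (D - A) + card (D' - A'))"
    unfolding p_exp using assms by (intro mult_left_mono) auto
  then show ?thesis
    unfolding bernoulli_weight_def by (simp add: power_add mult_ac)
qed

lemma finite_all_edges: "finite (all_edges n)"
proof -
  have "all_edges n \<subseteq> (\<lambda>(u, v). {u, v}) ` ({1..n} \<times> {1..n})"
    unfolding all_edges_def by auto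
  then show ?thesis by (rule finite_subset) simp
qed

lemma pmf_gnp:
  assumes "0 < p" "p < 1" "E \<subseteq> all_edges n"
  shows "pmf (gnp n p) E = bernoulli_weight p (all_edges n) E"
proof -
  let ?A = "all_edges n" and ?coins = "Pi_pmf (all_edges n) False (\<lambda>_. bernoulli_pmf p)"
  have set_coins: "set_pmf ?coins = PiE_dflt ?A False (\<lambda>_. UNIV)"
    using assms finite_all_edges by (simp add: set_Pi_pmf o_def)
  have inj: "inj_on (\<lambda>b. {e \<in> ?A. b e}) (set_pmf ?coins)"
    unfolding set_coins inj_on_def PiE_dflt_def by (auto simp: fun_eq_iff)
  have E: "E = {e \<in> ?A. e \<in> E}" and mem: "(\<lambda>e. e \<in> E) \<in> set_pmf ?coins"
    using assms(3) unfolding set_coins PiE_dflt_def by auto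
  have "pmf (gnp n p) E = pmf ?coins (\<lambda>e. e \<in> E)"
    unfolding gnp_def by (subst E) (rule pmf_map_inj[OF inj mem])
  also have "\<dots> = (\<Prod>e\<in>?A. pmf (bernoulli_pmf p) (e \<in> E))"
    using finite_all_edges assms(3) by (subst pmf_Pi') auto
  also have "\<dots> = (\<Prod>e\<in>E. p) * (\<Prod>e\<in>?A - E. 1 - p)"
    using finite_all_edges assms by (subst prod.subset_diff[of E]) (auto intro!: arg_cong2[where f="(*)"] prod.cong)
  finally show ?thesis unfolding bernoulli_weight_def by simp
qed

lemma expectation_gnp:
  assumes "0 < p" "p < 1"
  shows "measure_pmf.expectation (gnp n p) h
       = (\<Sum>E\<in>Pow (all_edges n). bernoulli_weight p (all_edges n) E * h E)"
proof -
  have "measure_pmf.expectation (gnp n p) h = (\<Sum>E\<in>Pow (all_edges n). h E * pmf (gnp n p) E)"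
    by (rule integral_measure_pmf_real) (auto simp: finite_all_edges gnp_def)
  then show ?thesis using assms by (simp add: pmf_gnp mult.commute)
qed

lemma measure_pmf_prob_bind:
  "measure_pmf.prob (bind_pmf M f) A = measure_pmf.expectation M (\<lambda>x. measure_pmf.prob (f x) A)"
  unfolding measure_pmf_bind
  by (rule measure_pmf.measure_bind[where N = "count_space UNIV"])
     (auto simp: space_subprob_algebra prob_space_imp_subprob_space measure_pmf.prob_space_axioms)

lemma all_edges_subset_Pow: "all_edges m \<subseteq> Pow {1..m}"
  unfolding all_edges_def by auto

lemma part_subset: "1 \<le> i \<Longrightarrow> i \<le> m \<Longrightarrow> part n m i \<subseteq> {1..n}"
proof -
  assume "1 \<le> i" "i \<le> m"
  then have "i * (n div m) \<le> m * (n div m)" by simp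
  also have "\<dots> \<le> n" by simp
  finally show ?thesis unfolding part_def by auto
qed

lemma card_part: "1 \<le> i \<Longrightarrow> card (part n m i) = n div m"
  unfolding part_def by (cases i) auto

lemma part_index_unique:
  assumes "0 < n div m" "1 \<le> i" "1 \<le> j" "x \<in> part n m i" "x \<in> part n m j"
  shows "i = j"
proof -
  have "(i - 1) * (n div m) < x" "x \<le> i * (n div m)" "(j - 1) * (n div m) < x" "x \<le> j * (n div m)"
    using assms(4,5) unfolding part_def by auto
  then have "(i - 1) * (n div m) < j * (n div m)" "(j - 1) * (n div m) < i * (n div m)"
    by linarith+
  then have "i - 1 < j" "j - 1 < i" by (metis mult_less_cancel2)+
  then show ?thesis using assms(2,3) by linarith
qed

lemma finite_obeying: "finite (obeying n m)"
  unfolding obeying_def part_def by (intro finite_PiE) auto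

lemma card_obeying: "card (obeying n m) = (n div m) ^ m"
  unfolding obeying_def by (simp add: card_PiE card_part)

lemma obeying_index_unique:
  assumes "0 < n div m" "vs \<in> obeying n m" "ws \<in> obeying n m" "i \<in> {1..m}" "j \<in> {1..m}"
    and "vs i = ws j"
  shows "i = j"
proof -
  have "vs i \<in> part n m i" using assms(2,4) unfolding obeying_def by (rule PiE_mem)
  moreover have "ws j \<in> part n m j" using assms(3,5) unfolding obeying_def by (rule PiE_mem)
  ultimately show ?thesis using part_index_unique[OF assms(1)] assms(4-6) by auto
qed

lemma inj_on_obeying:
  assumes "0 < n div m" "vs \<in> obeying n m"
  shows "inj_on vs {1..m}"
  by (rule inj_onI) (rule obeying_index_unique[OF assms assms(2)])

lemma obeying_range: "vs \<in> obeying n m \<Longrightarrow> vs ` {1..m} \<subseteq> {1..n}"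
  unfolding obeying_def using part_subset by (fastforce dest: PiE_mem)

definition edge_image :: "('a \<Rightarrow> 'b) \<Rightarrow> 'a set set \<Rightarrow> 'b set set" where
  "edge_image vs F = (\<lambda>e. vs ` e) ` F"

lemma edge_image_mono: "F \<subseteq> F' \<Longrightarrow> edge_image vs F \<subseteq> edge_image vs F'"
  unfolding edge_image_def by (rule image_mono)

lemma mem_edge_image_all_edges:
  "x \<in> edge_image vs (all_edges m) \<longleftrightarrow> (\<exists>i\<in>{1..m}. \<exists>j\<in>{1..m}. i \<noteq> j \<and> x = {vs i, vs j})"
proof
  assume "x \<in> edge_image vs (all_edges m)"
  then obtain i j where "i \<in> {1..m}" "j \<in> {1..m}" "i \<noteq> j" "x = vs ` {i, j}"
    unfolding edge_image_def all_edges_def by blast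
  then show "\<exists>i\<in>{1..m}. \<exists>j\<in>{1..m}. i \<noteq> j \<and> x = {vs i, vs j}"
    by (intro bexI[of _ i] bexI[of _ j]) auto
next
  assume "\<exists>i\<in>{1..m}. \<exists>j\<in>{1..m}. i \<noteq> j \<and> x = {vs i, vs j}"
  then obtain i j where "i \<in> {1..m}" "j \<in> {1..m}" "i \<noteq> j" and x: "x = vs ` {i, j}" by auto
  then have "{i, j} \<in> all_edges m" unfolding all_edges_def by blast
  with x show "x \<in> edge_image vs (all_edges m)" unfolding edge_image_def by (rule image_eqI)
qed

lemma doubleton_mem_edge_image_iff:
  assumes "inj_on vs {1..m}" "i \<in> {1..m}" "j \<in> {1..m}" "F \<subseteq> Pow {1..m}"
  shows "{vs i, vs j} \<in> edge_image vs F \<longleftrightarrow> {i, j} \<in> F"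
proof -
  have "vs ` {i, j} \<in> edge_image vs F \<longleftrightarrow> {i, j} \<in> F"
    unfolding edge_image_def
    by (rule inj_on_image_mem_iff[OF inj_on_image_Pow[OF assms(1)]]) (use assms in auto)
  then show ?thesis by simp
qed

lemma edge_image_all_edges_subset:
  assumes "inj_on vs {1..m}" "vs ` {1..m} \<subseteq> {1..n}"
  shows "edge_image vs (all_edges m) \<subseteq> all_edges n"
proof
  fix x assume "x \<in> edge_image vs (all_edges m)"
  then obtain i j where ij: "i \<in> {1..m}" "j \<in> {1..m}" "i \<noteq> j" "x = {vs i, vs j}"
    unfolding mem_edge_image_all_edges by blast
  have "vs i \<noteq> vs j" using assms(1) ij(1-3) unfolding inj_on_def by blast
  moreover have "vs i \<in> {1..n}" "vs j \<in> {1..n}" using assms(2) ij(1,2) by blast+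
  ultimately show "x \<in> all_edges n" unfolding all_edges_def using ij(4) by blast
qed

lemma bernoulli_weight_edge_image:
  assumes "inj_on vs {1..m}" "F \<subseteq> all_edges m"
  shows "bernoulli_weight p (edge_image vs (all_edges m)) (edge_image vs F) = bernoulli_weight p (all_edges m) F"
proof -
  have inj: "inj_on (image vs) (Pow {1..m})" by (rule inj_on_image_Pow[OF assms(1)])
  have all_Pow: "all_edges m \<subseteq> Pow {1..m}" and F_Pow: "F \<subseteq> Pow {1..m}"
    using all_edges_subset_Pow assms(2) by blast+
  have card_eq: "card (edge_image vs G) = card G" if "G \<subseteq> Pow {1..m}" for G
    unfolding edge_image_def by (rule card_image[OF inj_on_subset[OF inj that]])
  have "edge_image vs (all_edges m) - edge_image vs F = edge_image vs (all_edges m - F)"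
    unfolding edge_image_def using all_Pow F_Pow
    by (intro inj_on_image_set_diff[OF inj, symmetric]) blast+
  moreover have "card (edge_image vs (all_edges m - F)) = card (all_edges m - F)"
    using all_Pow by (intro card_eq) blast
  ultimately show ?thesis
    unfolding bernoulli_weight_def using F_Pow by (simp add: card_eq)
qed

lemma induced_copies_iff:
  assumes "inj_on vs {1..m}" "EH \<subseteq> all_edges m"
  shows "vs \<in> induced_copies n m EH E \<longleftrightarrow>
    vs \<in> obeying n m \<and> E \<inter> edge_image vs (all_edges m) = edge_image vs EH"
proof -
  have EH_Pow: "EH \<subseteq> Pow {1..m}" using assms(2) all_edges_subset_Pow by blast
  have "edge_image vs EH \<subseteq> edge_image vs (all_edges m)" by (rule edge_image_mono[OF assms(2)])
  then have "E \<inter> edge_image vs (all_edges m) = edge_image vs EH \<longleftrightarrow>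
      (\<forall>x \<in> edge_image vs (all_edges m). x \<in> E \<longleftrightarrow> x \<in> edge_image vs EH)"
    by blast
  also have "\<dots> \<longleftrightarrow> (\<forall>i\<in>{1..m}. \<forall>j\<in>{1..m}. i \<noteq> j \<longrightarrow>
      ({vs i, vs j} \<in> E \<longleftrightarrow> {vs i, vs j} \<in> edge_image vs EH))"
    unfolding Ball_def mem_edge_image_all_edges by blast
  also have "\<dots> \<longleftrightarrow>
      (\<forall>i\<in>{1..m}. \<forall>j\<in>{1..m}. i \<noteq> j \<longrightarrow> ({i, j} \<in> EH \<longleftrightarrow> {vs i, vs j} \<in> E))"
    using doubleton_mem_edge_image_iff[OF assms(1) _ _ EH_Pow] by (metis (no_types, lifting))
  finally show ?thesis unfolding induced_copies_def by blast
qed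

lemma edge_subset_image_iff:
  assumes "e \<in> all_edges n"
  shows "e \<subseteq> vs ` {1..m} \<longleftrightarrow> e \<in> edge_image vs (all_edges m)"
proof
  obtain u v where uv: "u \<noteq> v" "e = {u, v}" using assms unfolding all_edges_def by blast
  assume "e \<subseteq> vs ` {1..m}"
  then have "u \<in> vs ` {1..m}" "v \<in> vs ` {1..m}" using uv(2) by auto
  then obtain i j where "i \<in> {1..m}" "j \<in> {1..m}" "u = vs i" "v = vs j" by (elim imageE)
  moreover from this have "i \<noteq> j" using uv(1) by blast
  ultimately show "e \<in> edge_image vs (all_edges m)"
    unfolding mem_edge_image_all_edges using uv(2) by blast
next
  assume "e \<in> edge_image vs (all_edges m)"
  then show "e \<subseteq> vs ` {1..m}" unfolding mem_edge_image_all_edges by auto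
qed

lemma plant_eq:
  assumes "EH \<subseteq> all_edges m" "E \<subseteq> all_edges n"
  shows "plant m EH vs E = (E - edge_image vs (all_edges m)) \<union> edge_image vs EH"
proof -
  have "{e \<in> E. \<not> e \<subseteq> vs ` {1..m}} = E - edge_image vs (all_edges m)"
    using edge_subset_image_iff assms(2) by blast
  moreover have "{{vs i, vs j} | i j. {i, j} \<in> EH} = edge_image vs EH"
  proof (intro equalityI subsetI)
    fix x assume "x \<in> {{vs i, vs j} | i j. {i, j} \<in> EH}"
    then obtain i j where "{i, j} \<in> EH" "x = vs ` {i, j}" by auto
    then show "x \<in> edge_image vs EH" unfolding edge_image_def by (intro image_eqI)
  next
    fix x assume "x \<in> edge_image vs EH"
    then obtain e where e: "e \<in> EH" "x = vs ` e" unfolding edge_image_def by blast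
    then obtain i j where "e = {i, j}" using assms(1) unfolding all_edges_def by blast
    then show "x \<in> {{vs i, vs j} | i j. {i, j} \<in> EH}" using e by auto
  qed
  ultimately show ?thesis unfolding plant_def by simp
qed

lemma induced_copies_subset_obeying: "induced_copies n m EH E \<subseteq> obeying n m"
  unfolding induced_copies_def by blast

lemma finite_induced_copies: "finite (induced_copies n m EH E)"
  using finite_obeying induced_copies_subset_obeying by (rule finite_subset[rotated])

lemma sum_obeying_induced_copies:
  "(\<Sum>vs\<in>obeying n m. if vs \<in> induced_copies n m EH E then g vs else 0)
   = (\<Sum>vs\<in>induced_copies n m EH E. g vs)"
  using finite_obeying induced_copies_subset_obeying
  by (simp add: sum.inter_restrict[symmetric] Int_absorb1)

definition AHG_given :: "nat \<Rightarrow> nat \<Rightarrow> nat set set \<Rightarrow> nat \<Rightarrow> nat \<Rightarrow> nat set set \<Rightarrow> nat set set pmf" where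
  "AHG_given n m EH k k' E =
     (if induced_copies n m EH E = {}
      then map_pmf (del_inside E) (pmf_of_set (ksets {1..n} k))
      else bind_pmf (pmf_of_set (induced_copies n m EH E)) (\<lambda>vs. finish n k k' E (vs ` {1..m})))"

lemma AHG_dist_eq: "AHG_dist n p m EH k k' = bind_pmf (gnp n p) (AHG_given n m EH k k')"
  unfolding AHG_dist_def AHG_given_def ..

lemma sum_prob_finish_induced_copies:
  "(\<Sum>vs\<in>induced_copies n m EH E. measure_pmf.prob (finish n k k' E (vs ` {1..m})) A)
   = real (card (induced_copies n m EH E)) * measure_pmf.prob (AHG_given n m EH k k' E) A"
proof (cases "induced_copies n m EH E = {}")
  case False
  then show ?thesis
    unfolding AHG_given_def using finite_induced_copies
    by (simp add: measure_pmf_prob_bind integral_pmf_of_set)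
qed simp

definition agreement :: "nat \<Rightarrow> (nat \<Rightarrow> nat) \<Rightarrow> (nat \<Rightarrow> nat) \<Rightarrow> nat set" where
  "agreement m vs ws = {i \<in> {1..m}. vs i = ws i}"

lemma card_obeying_agreement_le:
  assumes "vs \<in> obeying n m" "T \<subseteq> {1..m}"
  shows "card {ws \<in> obeying n m. agreement m vs ws = T} \<le> (n div m) ^ card ({1..m} - T)"
proof -
  let ?slot = "\<lambda>i. if i \<in> T then {vs i} else part n m i"
  have "{ws \<in> obeying n m. agreement m vs ws = T} \<subseteq> PiE {1..m} ?slot"
    unfolding obeying_def agreement_def by (auto simp: PiE_iff extensional_def)
  then have "card {ws \<in> obeying n m. agreement m vs ws = T} \<le> card (PiE {1..m} ?slot)"
    by (rule card_mono[rotated]) (simp add: finite_PiE part_def)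
  also have "\<dots> = (\<Prod>i\<in>{1..m}. if i \<in> T then 1 else n div m)"
    by (simp add: card_PiE) (rule prod.cong, auto simp: card_part)
  also have "\<dots> = (n div m) ^ card ({1..m} - T)"
    by (simp add: prod.If_cases Int_absorb2 assms(2) Diff_eq)
  finally show ?thesis .
qed

lemma sum_obeying_agreement_le:
  fixes h :: "nat set \<Rightarrow> real"
  assumes "vs \<in> obeying n m" "\<And>T. T \<subseteq> {1..m} \<Longrightarrow> 0 \<le> h T"
  shows "(\<Sum>ws\<in>obeying n m. h (agreement m vs ws))
       \<le> (\<Sum>T\<in>Pow {1..m}. real (n div m) ^ card ({1..m} - T) * h T)"
proof -
  have "agreement m vs ` obeying n m \<subseteq> Pow {1..m}" unfolding agreement_def by blast
  then have "(\<Sum>ws\<in>obeying n m. h (agreement m vs ws))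
      = (\<Sum>T\<in>Pow {1..m}. real (card {ws \<in> obeying n m. agreement m vs ws = T}) * h T)"
    by (subst sum.group[OF finite_obeying, symmetric]) (auto simp: sum.cong[OF refl, of _ "\<lambda>_. h _"])
  also have "\<dots> \<le> (\<Sum>T\<in>Pow {1..m}. real (n div m) ^ card ({1..m} - T) * h T)"
    using assms card_obeying_agreement_le
    by (intro sum_mono mult_right_mono) (auto simp flip: of_nat_power intro: of_nat_mono)
  finally show ?thesis .
qed

lemma card_edge_image_Int_le:
  assumes "0 < n div m" "vs \<in> obeying n m" "ws \<in> obeying n m" "F \<subseteq> all_edges m"
  shows "card (edge_image vs F \<inter> edge_image ws F) \<le> card {e \<in> F. e \<subseteq> agreement m vs ws}"
proof -
  have fin: "finite F" using assms(4) finite_all_edges by (rule finite_subset)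
  have "edge_image vs F \<inter> edge_image ws F \<subseteq> edge_image vs {e \<in> F. e \<subseteq> agreement m vs ws}"
  proof
    fix x assume "x \<in> edge_image vs F \<inter> edge_image ws F"
    then obtain e e' where e: "e \<in> F" "x = vs ` e" and e': "e' \<in> F" "x = ws ` e'"
      unfolding edge_image_def by blast
    have e_Pow: "e \<subseteq> {1..m}" "e' \<subseteq> {1..m}"
      using e(1) e'(1) assms(4) all_edges_subset_Pow by blast+
    have "e \<subseteq> agreement m vs ws"
    proof
      fix u assume u: "u \<in> e"
      then have "vs u \<in> ws ` e'" using e(2) e'(2) by blast
      then obtain k where k: "k \<in> e'" "vs u = ws k" by blast
      then have "u = k" using obeying_index_unique[OF assms(1-3)] e_Pow u by blast
      then show "u \<in> agreement m vs ws" unfolding agreement_def using k e_Pow u by auto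
    qed
    then show "x \<in> edge_image vs {e \<in> F. e \<subseteq> agreement m vs ws}"
      unfolding edge_image_def using e by blast
  qed
  then have "card (edge_image vs F \<inter> edge_image ws F) \<le> card (edge_image vs {e \<in> F. e \<subseteq> agreement m vs ws})"
    by (rule card_mono[rotated]) (simp add: edge_image_def fin)
  also have "\<dots> \<le> card {e \<in> F. e \<subseteq> agreement m vs ws}"
    unfolding edge_image_def by (rule card_image_le) (simp add: fin)
  finally show ?thesis .
qed

lemma card_edges_within_le:
  assumes "finite T"
  shows "card {e \<in> all_edges m. e \<subseteq> T} \<le> card T ^ 2"
proof -
  have "{e \<in> all_edges m. e \<subseteq> T} \<subseteq> (\<lambda>(i, j). {i, j}) ` (T \<times> T)"
    unfolding all_edges_def by auto
  then have "card {e \<in> all_edges m. e \<subseteq> T} \<le> card ((\<lambda>(i, j). {i, j}) ` (T \<times> T))"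
    by (rule card_mono[rotated]) (simp add: assms)
  also have "\<dots> \<le> card (T \<times> T)" by (rule card_image_le) (simp add: assms)
  finally show ?thesis by (simp add: card_cartesian_product power2_eq_square)
qed

lemma card_edges_within_balanced:
  assumes "balanced_graph m EH \<alpha>" "T \<subseteq> {1..m}"
  shows "real (card {e \<in> EH. e \<subseteq> T}) \<le> \<alpha> * real (card T) / 2"
proof (cases "T = {}")
  case True
  have "{e \<in> EH. e \<subseteq> T} = {}"
    using True assms(1) unfolding balanced_graph_def all_edges_def by auto
  then show ?thesis using True by simp
next
  case False
  then have "0 < card T" using assms(2) by (simp add: card_gt_0_iff finite_subset)
  moreover have "avg_deg EH T \<le> \<alpha>" using assms False unfolding balanced_graph_def by blast
  ultimately show ?thesis unfolding avg_deg_def by (simp add: field_simps)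
qed

lemma size_bias_pointwise_ge:
  fixes x \<psi> \<mu> \<beta> :: real
  assumes "0 \<le> x" "0 \<le> \<psi>" "\<psi> \<le> 1" "0 < \<mu>" "0 \<le> \<beta>" "\<beta> < 1"
  shows "\<beta> * (\<psi> - (x - \<mu>) ^ 2 / ((1 - \<beta>) * \<mu>) ^ 2) \<le> x * \<psi> / \<mu>"
proof (cases "x < \<beta> * \<mu>")
  case True
  then have "(1 - \<beta>) * \<mu> \<le> \<bar>x - \<mu>\<bar>" by (simp add: algebra_simps)
  then have "((1 - \<beta>) * \<mu>) ^ 2 \<le> \<bar>x - \<mu>\<bar> ^ 2" using assms by (intro power_mono) auto
  then have "((1 - \<beta>) * \<mu>) ^ 2 \<le> (x - \<mu>) ^ 2" by simp
  then have "1 \<le> (x - \<mu>) ^ 2 / ((1 - \<beta>) * \<mu>) ^ 2" using assms by (subst le_divide_eq_1_pos) auto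
  then have "\<psi> - (x - \<mu>) ^ 2 / ((1 - \<beta>) * \<mu>) ^ 2 \<le> 0" using assms by linarith
  then have "\<beta> * (\<psi> - (x - \<mu>) ^ 2 / ((1 - \<beta>) * \<mu>) ^ 2) \<le> 0"
    using assms by (simp add: mult_nonneg_nonpos)
  also have "0 \<le> x * \<psi> / \<mu>" using assms by simp
  finally show ?thesis .
next
  case False
  have "\<beta> * (\<psi> - (x - \<mu>) ^ 2 / ((1 - \<beta>) * \<mu>) ^ 2) \<le> \<beta> * \<psi>"
    using assms by (simp add: mult_left_mono)
  also have "\<dots> \<le> x / \<mu> * \<psi>"
    using False assms by (intro mult_right_mono) (simp_all add: field_simps)
  finally show ?thesis by simp
qed

lemma size_biased_average_ge:
  fixes W X \<Psi> :: "'a \<Rightarrow> real"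
  assumes "finite I" and W: "\<And>i. i \<in> I \<Longrightarrow> 0 \<le> W i" "(\<Sum>i\<in>I. W i) = 1"
    and mean: "(\<Sum>i\<in>I. W i * X i) = \<mu>" and second: "(\<Sum>i\<in>I. W i * X i ^ 2) \<le> (1 + \<eta>) * \<mu> ^ 2"
    and "0 < \<mu>" and X: "\<And>i. i \<in> I \<Longrightarrow> 0 \<le> X i"
    and \<Psi>: "\<And>i. i \<in> I \<Longrightarrow> 0 \<le> \<Psi> i \<and> \<Psi> i \<le> 1"
    and "0 \<le> \<beta>" "\<beta> < 1"
  shows "\<beta> * ((\<Sum>i\<in>I. W i * \<Psi> i) - \<eta> / (1 - \<beta>) ^ 2) \<le> (\<Sum>i\<in>I. W i * (X i * \<Psi> i)) / \<mu>"
proof -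
  define c where "c = ((1 - \<beta>) * \<mu>) ^ 2"
  have c: "0 < c" unfolding c_def using assms by simp
  have pointwise: "\<beta> * (\<Psi> i - (X i - \<mu>) ^ 2 / c) \<le> X i * \<Psi> i / \<mu>" if "i \<in> I" for i
    unfolding c_def using size_bias_pointwise_ge X[OF that] \<Psi>[OF that] assms by blast
  have variance: "(\<Sum>i\<in>I. W i * (X i - \<mu>) ^ 2) \<le> \<eta> * \<mu> ^ 2"
  proof -
    have "(\<Sum>i\<in>I. W i * (X i - \<mu>) ^ 2)
        = (\<Sum>i\<in>I. W i * X i ^ 2) - 2 * \<mu> * (\<Sum>i\<in>I. W i * X i) + \<mu> ^ 2 * (\<Sum>i\<in>I. W i)"
      by (simp add: power2_diff algebra_simps sum.distrib sum_subtractf sum_distrib_left sum_distrib_right)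
    then show ?thesis using second mean W by (simp add: algebra_simps power2_eq_square)
  qed
  have "\<beta> * ((\<Sum>i\<in>I. W i * \<Psi> i) - (\<Sum>i\<in>I. W i * (X i - \<mu>) ^ 2) / c)
      = (\<Sum>i\<in>I. W i * (\<beta> * (\<Psi> i - (X i - \<mu>) ^ 2 / c)))"
    by (simp add: algebra_simps sum_distrib_left sum_subtractf sum_divide_distrib)
  also have "\<dots> \<le> (\<Sum>i\<in>I. W i * (X i * \<Psi> i / \<mu>))"
    by (intro sum_mono mult_left_mono pointwise W)
  also have "\<dots> = (\<Sum>i\<in>I. W i * (X i * \<Psi> i)) / \<mu>" by (simp add: sum_divide_distrib)
  finally have main: "\<beta> * ((\<Sum>i\<in>I. W i * \<Psi> i) - (\<Sum>i\<in>I. W i * (X i - \<mu>) ^ 2) / c)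
      \<le> (\<Sum>i\<in>I. W i * (X i * \<Psi> i)) / \<mu>" .
  have "(\<Sum>i\<in>I. W i * (X i - \<mu>) ^ 2) / c \<le> \<eta> * \<mu> ^ 2 / c"
    using variance c by (simp add: divide_right_mono)
  also have "\<dots> = \<eta> / (1 - \<beta>) ^ 2" unfolding c_def using assms by (simp add: power_mult_distrib)
  finally have "\<beta> * ((\<Sum>i\<in>I. W i * \<Psi> i) - \<eta> / (1 - \<beta>) ^ 2)
      \<le> \<beta> * ((\<Sum>i\<in>I. W i * \<Psi> i) - (\<Sum>i\<in>I. W i * (X i - \<mu>) ^ 2) / c)"
    using assms by (intro mult_left_mono) auto
  with main show ?thesis by linarith
qed

locale copy_model =
  fixes n m :: nat and EH :: "nat set set" and p :: real
  assumes parts_nonempty: "0 < n div m"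
    and EH_edges: "EH \<subseteq> all_edges m"
    and p_pos: "0 < p" and p_less_1: "p < 1"
begin

abbreviation weight :: "nat set set \<Rightarrow> real" where
  "weight \<equiv> bernoulli_weight p (all_edges n)"

abbreviation copy_pairs :: "(nat \<Rightarrow> nat) \<Rightarrow> nat set set" where
  "copy_pairs vs \<equiv> edge_image vs (all_edges m)"

definition copy_prob :: real where
  "copy_prob = bernoulli_weight p (all_edges m) EH"

definition mean_copies :: real where
  "mean_copies = real (card (obeying n m)) * copy_prob"

definition joint_copy_prob :: "(nat \<Rightarrow> nat) \<Rightarrow> (nat \<Rightarrow> nat) \<Rightarrow> real" where
  "joint_copy_prob vs ws = (\<Sum>E\<in>Pow (all_edges n). weight E *
     (if vs \<in> induced_copies n m EH E \<and> ws \<in> induced_copies n m EH E then 1 else 0))"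

lemma weight_nonneg: "0 \<le> weight E"
  using p_pos p_less_1 by (intro bernoulli_weight_nonneg) auto

lemma mean_copies_pos: "0 < mean_copies"
  using parts_nonempty p_pos p_less_1
  unfolding mean_copies_def copy_prob_def bernoulli_weight_def by (simp add: card_obeying)

lemma copy_pairs_subset: "vs \<in> obeying n m \<Longrightarrow> copy_pairs vs \<subseteq> all_edges n"
  by (intro edge_image_all_edges_subset inj_on_obeying[OF parts_nonempty] obeying_range)

lemma induced_copy_iff_trace:
  "vs \<in> obeying n m \<Longrightarrow> vs \<in> induced_copies n m EH E \<longleftrightarrow> E \<inter> copy_pairs vs = edge_image vs EH"
  using induced_copies_iff[OF inj_on_obeying[OF parts_nonempty] EH_edges] by blast

lemma sum_weight_induced_copy:
  assumes vs: "vs \<in> obeying n m"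
  shows "(\<Sum>E\<in>Pow (all_edges n). weight E * (if vs \<in> induced_copies n m EH E then h E else 0))
       = copy_prob * (\<Sum>R\<in>Pow (all_edges n - copy_pairs vs).
            bernoulli_weight p (all_edges n - copy_pairs vs) R * h (edge_image vs EH \<union> R))"
proof -
  have "(\<Sum>E\<in>Pow (all_edges n). weight E * (if vs \<in> induced_copies n m EH E then h E else 0))
      = (\<Sum>E\<in>Pow (all_edges n). weight E * (if E \<inter> copy_pairs vs = edge_image vs EH then h E else 0))"
    using induced_copy_iff_trace[OF vs] by simp
  also have "\<dots> = bernoulli_weight p (copy_pairs vs) (edge_image vs EH) * (\<Sum>R\<in>Pow (all_edges n - copy_pairs vs).
            bernoulli_weight p (all_edges n - copy_pairs vs) R * h (edge_image vs EH \<union> R))"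
    using finite_all_edges copy_pairs_subset[OF vs] edge_image_mono[OF EH_edges]
    by (rule sum_bernoulli_weight_restrict)
  also have "bernoulli_weight p (copy_pairs vs) (edge_image vs EH) = copy_prob"
    unfolding copy_prob_def
    by (rule bernoulli_weight_edge_image[OF inj_on_obeying[OF parts_nonempty vs] EH_edges])
  finally show ?thesis .
qed

lemma sum_weight_plant:
  assumes vs: "vs \<in> obeying n m"
  shows "copy_prob * (\<Sum>E\<in>Pow (all_edges n). weight E * h (plant m EH vs E))
       = (\<Sum>E\<in>Pow (all_edges n). weight E * (if vs \<in> induced_copies n m EH E then h E else 0))"
proof -
  have "(\<Sum>E\<in>Pow (all_edges n). weight E * h (plant m EH vs E))
      = (\<Sum>E\<in>Pow (all_edges n). weight E * h ((E - copy_pairs vs) \<union> edge_image vs EH))"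
    using plant_eq[OF EH_edges] by (intro sum.cong refl) auto
  also have "\<dots> = (\<Sum>R\<in>Pow (all_edges n - copy_pairs vs).
            bernoulli_weight p (all_edges n - copy_pairs vs) R * h (edge_image vs EH \<union> R))"
    using finite_all_edges copy_pairs_subset[OF vs] edge_image_mono[OF EH_edges]
    by (rule sum_bernoulli_weight_resample)
  finally show ?thesis using sum_weight_induced_copy[OF vs] by simp
qed

lemma mean_induced_copies:
  "(\<Sum>E\<in>Pow (all_edges n). weight E * real (card (induced_copies n m EH E))) = mean_copies"
proof -
  have card_sum: "real (card (induced_copies n m EH E))
      = (\<Sum>vs\<in>obeying n m. if vs \<in> induced_copies n m EH E then 1 else 0)" for E
    using sum_obeying_induced_copies[of n m EH E "\<lambda>_. 1 :: real"] by simp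
  have "(\<Sum>E\<in>Pow (all_edges n). weight E * real (card (induced_copies n m EH E)))
      = (\<Sum>vs\<in>obeying n m. \<Sum>E\<in>Pow (all_edges n). weight E * (if vs \<in> induced_copies n m EH E then 1 else 0))"
    unfolding card_sum sum_distrib_left by (rule sum.swap)
  also have "\<dots> = (\<Sum>vs\<in>obeying n m. copy_prob)"
    using sum_weight_plant[where h = "\<lambda>_. 1"] finite_all_edges
    by (intro sum.cong refl) (simp add: sum_bernoulli_weight)
  finally show ?thesis unfolding mean_copies_def by simp
qed

lemma prob_AHG_dist:
  "measure_pmf.prob (AHG_dist n p m EH k k') A
   = (\<Sum>E\<in>Pow (all_edges n). weight E * measure_pmf.prob (AHG_given n m EH k k' E) A)"
  unfolding AHG_dist_eq measure_pmf_prob_bind expectation_gnp[OF p_pos p_less_1] ..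

lemma prob_GH_dist:
  "measure_pmf.prob (GH_dist n p m EH k k') A
   = (\<Sum>E\<in>Pow (all_edges n). weight E *
        (real (card (induced_copies n m EH E)) * measure_pmf.prob (AHG_given n m EH k k' E) A))
     / mean_copies"
proof -
  let ?fin = "\<lambda>E vs. measure_pmf.prob (finish n k k' E (vs ` {1..m})) A"
  have ne: "obeying n m \<noteq> {}"
    using parts_nonempty card_obeying[of n m] by (metis card.empty power_not_zero less_not_refl)
  have q: "0 < copy_prob" using mean_copies_pos unfolding mean_copies_def by (simp add: zero_less_mult_iff)
  have "measure_pmf.prob (GH_dist n p m EH k k') A
      = (\<Sum>E\<in>Pow (all_edges n). weight E * ((\<Sum>vs\<in>obeying n m. ?fin (plant m EH vs E) vs) / card (obeying n m)))"
    unfolding GH_dist_def measure_pmf_prob_bind expectation_gnp[OF p_pos p_less_1]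
    using ne finite_obeying by (simp add: integral_pmf_of_set)
  also have "\<dots> = (\<Sum>vs\<in>obeying n m. copy_prob * (\<Sum>E\<in>Pow (all_edges n). weight E * ?fin (plant m EH vs E) vs))
      / mean_copies"
    unfolding mean_copies_def using q
    by (simp add: sum_divide_distrib sum_distrib_left sum.swap[of _ "obeying n m"] mult_ac)
  also have "\<dots> = (\<Sum>vs\<in>obeying n m. \<Sum>E\<in>Pow (all_edges n).
        weight E * (if vs \<in> induced_copies n m EH E then ?fin E vs else 0)) / mean_copies"
    using sum_weight_plant by (intro arg_cong2[where f = "(/)"] sum.cong refl)
  also have "\<dots> = (\<Sum>E\<in>Pow (all_edges n). weight E * (\<Sum>vs\<in>induced_copies n m EH E. ?fin E vs)) / mean_copies"
    by (subst sum.swap) (simp only: sum_distrib_left[symmetric] sum_obeying_induced_copies)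
  finally show ?thesis unfolding sum_prob_finish_induced_copies .
qed

lemma joint_copy_prob_overlap_le:
  assumes vs: "vs \<in> obeying n m" and ws: "ws \<in> obeying n m"
  shows "joint_copy_prob vs ws
       * (p ^ card (edge_image vs EH \<inter> edge_image ws EH) * (1 - p) ^ card (copy_pairs vs \<inter> copy_pairs ws))
       \<le> copy_prob ^ 2"
proof -
  let ?U = "copy_pairs vs \<union> copy_pairs ws" and ?B = "edge_image vs EH \<union> edge_image ws EH"
  let ?overlap = "p ^ card (edge_image vs EH \<inter> edge_image ws EH) * (1 - p) ^ card (copy_pairs vs \<inter> copy_pairs ws)"
  have U: "?U \<subseteq> all_edges n" using copy_pairs_subset vs ws by blast
  have B: "?B \<subseteq> ?U" using edge_image_mono[OF EH_edges] by blast
  have "joint_copy_prob vs ws \<le> (\<Sum>E\<in>Pow (all_edges n). weight E * (if E \<inter> ?U = ?B then 1 else 0))"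
    unfolding joint_copy_prob_def using induced_copy_iff_trace[OF vs] induced_copy_iff_trace[OF ws]
    by (intro sum_mono mult_left_mono weight_nonneg) auto
  also have "\<dots> = bernoulli_weight p ?U ?B"
    using sum_bernoulli_weight_restrict[OF finite_all_edges U B, of p "\<lambda>_. 1"]
    by (simp add: sum_bernoulli_weight finite_all_edges)
  finally have "joint_copy_prob vs ws * ?overlap \<le> bernoulli_weight p ?U ?B * ?overlap"
    using p_pos p_less_1 by (intro mult_right_mono) auto
  also have "\<dots> \<le> bernoulli_weight p (copy_pairs vs) (edge_image vs EH)
      * bernoulli_weight p (copy_pairs ws) (edge_image ws EH)"
    using finite_all_edges copy_pairs_subset[OF vs] copy_pairs_subset[OF ws] p_pos p_less_1
    by (intro bernoulli_weight_Un_le edge_image_mono[OF EH_edges]) (auto intro: finite_subset)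
  also have "\<dots> = copy_prob ^ 2"
    unfolding copy_prob_def power2_eq_square
    using bernoulli_weight_edge_image[OF inj_on_obeying[OF parts_nonempty] EH_edges] vs ws by simp
  finally show ?thesis .
qed

lemma joint_copy_prob_agreement_le:
  assumes bal: "balanced_graph m EH \<alpha>" and vs: "vs \<in> obeying n m" and ws: "ws \<in> obeying n m"
  shows "joint_copy_prob vs ws
       * ((p powr (\<alpha> / 2)) ^ card (agreement m vs ws) * (1 - p) ^ (card (agreement m vs ws) ^ 2))
       \<le> copy_prob ^ 2"
proof -
  let ?T = "agreement m vs ws" let ?t = "card (agreement m vs ws)"
  let ?k = "card (edge_image vs EH \<inter> edge_image ws EH)" and ?l = "card (copy_pairs vs \<inter> copy_pairs ws)"
  have T: "?T \<subseteq> {1..m}" unfolding agreement_def by blast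
  have "real ?k \<le> \<alpha> * real ?t / 2"
    using card_edge_image_Int_le[OF parts_nonempty vs ws EH_edges] card_edges_within_balanced[OF bal T]
    by linarith
  then have "(p powr (\<alpha> / 2)) ^ ?t \<le> p ^ ?k"
    using p_pos p_less_1 by (simp add: powr_realpow[symmetric] powr_powr powr_mono' mult.commute)
  moreover have "?l \<le> ?t ^ 2"
    using card_edge_image_Int_le[OF parts_nonempty vs ws order_refl] card_edges_within_le[of ?T m] T
    by (meson finite_atLeastAtMost finite_subset le_trans)
  then have "(1 - p) ^ (?t ^ 2) \<le> (1 - p) ^ ?l"
    using p_pos p_less_1 by (intro power_decreasing) auto
  moreover have "0 \<le> joint_copy_prob vs ws"
    unfolding joint_copy_prob_def by (intro sum_nonneg mult_nonneg_nonneg weight_nonneg) auto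
  ultimately have "joint_copy_prob vs ws * ((p powr (\<alpha> / 2)) ^ ?t * (1 - p) ^ (?t ^ 2))
      \<le> joint_copy_prob vs ws * (p ^ ?k * (1 - p) ^ ?l)"
    using p_pos p_less_1 by (intro mult_left_mono mult_mono) auto
  also have "\<dots> \<le> copy_prob ^ 2" by (rule joint_copy_prob_overlap_le[OF vs ws])
  finally show ?thesis .
qed

lemma joint_copy_prob_le:
  assumes bal: "balanced_graph m EH \<alpha>" and half: "1 / 2 \<le> (1 - p) ^ (m ^ 2)"
    and vs: "vs \<in> obeying n m" and ws: "ws \<in> obeying n m"
  shows "joint_copy_prob vs ws \<le> copy_prob ^ 2 * (2 * (1 / p powr (\<alpha> / 2)) ^ card (agreement m vs ws)
            - (if agreement m vs ws = {} then 1 else 0))"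
proof -
  let ?T = "agreement m vs ws" let ?t = "card (agreement m vs ws)"
  let ?f = "(p powr (\<alpha> / 2)) ^ ?t * (1 - p) ^ (?t ^ 2)"
  let ?g = "2 * (1 / p powr (\<alpha> / 2)) ^ ?t - (if ?T = {} then 1 else 0)"
  have "1 \<le> ?f * ?g"
  proof (cases "?T = {}")
    case False
    have "?T \<subseteq> {1..m}" unfolding agreement_def by blast
    then have "?t \<le> card {1..m}" by (rule card_mono[OF finite_atLeastAtMost])
    then have "?t \<le> m" by simp
    then have "(1 - p) ^ (m ^ 2) \<le> (1 - p) ^ (?t ^ 2)"
      using p_pos p_less_1 by (intro power_decreasing power_mono) auto
    then have "1 / 2 \<le> (1 - p) ^ (?t ^ 2)" using half by linarith
    then show ?thesis using False p_pos by (simp add: power_one_over field_simps)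
  qed simp
  moreover have "0 \<le> joint_copy_prob vs ws"
    unfolding joint_copy_prob_def by (intro sum_nonneg mult_nonneg_nonneg weight_nonneg) auto
  ultimately have "joint_copy_prob vs ws \<le> joint_copy_prob vs ws * ?f * ?g"
    by (simp add: mult.assoc mult_le_cancel_left1)
  also have "\<dots> \<le> copy_prob ^ 2 * ?g"
    using joint_copy_prob_agreement_le[OF bal vs ws] p_pos by (intro mult_right_mono) auto
  finally show ?thesis .
qed

lemma second_moment_eq_sum_joint_copy_prob:
  "(\<Sum>E\<in>Pow (all_edges n). weight E * real (card (induced_copies n m EH E)) ^ 2)
   = (\<Sum>vs\<in>obeying n m. \<Sum>ws\<in>obeying n m. joint_copy_prob vs ws)"
proof -
  have "real (card (induced_copies n m EH E)) ^ 2 = (\<Sum>vs\<in>obeying n m. \<Sum>ws\<in>obeying n m.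
      if vs \<in> induced_copies n m EH E \<and> ws \<in> induced_copies n m EH E then 1 else 0)" for E
  proof -
    have "real (card (induced_copies n m EH E))
        = (\<Sum>vs\<in>obeying n m. if vs \<in> induced_copies n m EH E then 1 else 0)"
      using sum_obeying_induced_copies[of n m EH E "\<lambda>_. 1 :: real"] by simp
    then show ?thesis by (simp only: power2_eq_square sum_product) (auto intro!: sum.cong)
  qed
  then show ?thesis
    unfolding joint_copy_prob_def by (simp add: sum_distrib_left sum.swap[of _ "Pow (all_edges n)"])
qed

lemma second_moment_induced_copies:
  assumes bal: "balanced_graph m EH \<alpha>" and half: "1 / 2 \<le> (1 - p) ^ (m ^ 2)"
  shows "(\<Sum>E\<in>Pow (all_edges n). weight E * real (card (induced_copies n m EH E)) ^ 2)
       \<le> mean_copies ^ 2 * (2 * (1 + 1 / (p powr (\<alpha> / 2) * real (n div m))) ^ m - 1)"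
proof -
  let ?Y = "1 / p powr (\<alpha> / 2)" and ?s = "real (n div m)"
  let ?h = "\<lambda>T. 2 * ?Y ^ card T - (if T = {} then 1 else 0) :: real"
  have sum_h: "(\<Sum>T\<in>Pow {1..m}. ?s ^ card ({1..m} - T) * ?h T) = 2 * (?Y + ?s) ^ m - ?s ^ m"
  proof -
    have split: "?s ^ card ({1..m} - T) * ?h T
        = 2 * (?Y ^ card T * ?s ^ card ({1..m} - T)) - (if T = {} then ?s ^ m else 0)" for T
      by (cases "T = {}") (simp_all add: algebra_simps)
    show ?thesis
      unfolding split sum_subtractf sum_distrib_left[symmetric] sum_Pow_power_card[OF finite_atLeastAtMost]
      by simp
  qed
  have "(\<Sum>vs\<in>obeying n m. \<Sum>ws\<in>obeying n m. joint_copy_prob vs ws)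
      \<le> (\<Sum>vs\<in>obeying n m. \<Sum>ws\<in>obeying n m. copy_prob ^ 2 * ?h (agreement m vs ws))"
    by (intro sum_mono joint_copy_prob_le[OF bal half])
  also have "\<dots> \<le> (\<Sum>vs\<in>obeying n m. copy_prob ^ 2 * (2 * (?Y + ?s) ^ m - ?s ^ m))"
  proof (intro sum_mono)
    fix vs assume vs: "vs \<in> obeying n m"
    have "(\<Sum>ws\<in>obeying n m. ?h (agreement m vs ws)) \<le> 2 * (?Y + ?s) ^ m - ?s ^ m"
      using sum_obeying_agreement_le[OF vs, of ?h] p_pos sum_h by simp
    then show "(\<Sum>ws\<in>obeying n m. copy_prob ^ 2 * ?h (agreement m vs ws))
        \<le> copy_prob ^ 2 * (2 * (?Y + ?s) ^ m - ?s ^ m)"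
      by (simp add: sum_distrib_left[symmetric] mult_left_mono)
  qed
  also have "\<dots> = mean_copies ^ 2 * (2 * (1 + 1 / (p powr (\<alpha> / 2) * ?s)) ^ m - 1)"
  proof -
    have "(?Y + ?s) ^ m = ?s ^ m * (1 + 1 / (p powr (\<alpha> / 2) * ?s)) ^ m"
      using parts_nonempty by (simp add: power_mult_distrib[symmetric] field_simps)
    then show ?thesis
      unfolding mean_copies_def by (simp add: card_obeying power2_eq_square algebra_simps)
  qed
  finally show ?thesis unfolding second_moment_eq_sum_joint_copy_prob .
qed

end

definition moment_conditions :: "nat \<Rightarrow> nat \<Rightarrow> real \<Rightarrow> real \<Rightarrow> real \<Rightarrow> bool" where
  "moment_conditions n m p \<alpha> \<epsilon> \<longleftrightarrow> 0 < n div m \<and> 0 < p \<and> p < 1 \<and> 1 / 2 \<le> (1 - p) ^ (m ^ 2)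
     \<and> (1 + 1 / (p powr (\<alpha> / 2) * real (n div m))) ^ m \<le> 1 + 2 * \<epsilon>"

lemma prob_GH_dist_ge:
  assumes bal: "balanced_graph m EH \<alpha>" and cond: "moment_conditions n m p \<alpha> \<epsilon>"
    and "0 \<le> \<beta>" "\<beta> < 1"
  shows "\<beta> * (measure_pmf.prob (AHG_dist n p m EH k k') A - 4 * \<epsilon> / (1 - \<beta>) ^ 2)
       \<le> measure_pmf.prob (GH_dist n p m EH k k') A"
proof -
  interpret copy_model n m EH p
    using bal cond unfolding balanced_graph_def moment_conditions_def by unfold_locales auto
  have "(\<Sum>E\<in>Pow (all_edges n). weight E * real (card (induced_copies n m EH E)) ^ 2)
      \<le> mean_copies ^ 2 * (2 * (1 + 1 / (p powr (\<alpha> / 2) * real (n div m))) ^ m - 1)"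
    using cond unfolding moment_conditions_def by (intro second_moment_induced_copies[OF bal]) simp
  also have "\<dots> \<le> mean_copies ^ 2 * (1 + 4 * \<epsilon>)"
    using cond unfolding moment_conditions_def by (intro mult_left_mono) auto
  also have "\<dots> = (1 + 4 * \<epsilon>) * mean_copies ^ 2" by (rule mult.commute)
  finally show ?thesis
    unfolding prob_GH_dist prob_AHG_dist using assms
    by (intro size_biased_average_ge mean_induced_copies mean_copies_pos weight_nonneg)
       (auto simp: finite_all_edges sum_bernoulli_weight)
qed

lemma power_one_plus_le:
  fixes x :: real
  assumes "0 \<le> x" "real m * x \<le> 1 / 2"
  shows "(1 + x) ^ m \<le> 1 + 2 * (real m * x)"
proof (cases "m = 0")
  case False
  have "(1 + x) ^ m = (1 + (real m * x) / real m) ^ m" using False by simp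
  also have "\<dots> \<le> exp (real m * x)"
    using assms(1) False by (intro exp_ge_one_plus_x_over_n_power_n) (auto intro: order_trans[of _ 0])
  also have "\<dots> \<le> 1 + 2 * (real m * x)" using assms by (intro real_exp_bound_lemma) auto
  finally show ?thesis .
qed simp

lemma half_le_one_minus_power:
  fixes p :: real
  assumes "0 \<le> p" "p \<le> 1" "real k * p \<le> 1 / 2"
  shows "1 / 2 \<le> (1 - p) ^ k"
  using Bernoulli_inequality[of "- p" k] assms by simp

lemma moment_conditions_powr:
  fixes \<delta> \<rho> \<alpha> \<epsilon> :: real
  assumes n: "1 < real n" and m: "real m = real n powr \<rho>" "m dvd n"
    and "0 < \<rho>" "\<rho> \<le> 1" "\<delta> < 1" "\<epsilon> \<le> 1 / 2"
    and small1: "real n powr (2 * \<rho> + \<delta> - 1) \<le> 1 / 2"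
    and small2: "real n powr (2 * \<rho> - 1 + (1 - \<delta>) * \<alpha> / 2) \<le> \<epsilon>"
  shows "moment_conditions n m (real n powr (\<delta> - 1)) \<alpha> \<epsilon>"
proof -
  let ?p = "real n powr (\<delta> - 1)"
  have m_pos: "0 < m" using m(1) n by (cases "m = 0") auto
  have "real n powr \<rho> \<le> real n powr 1" using n \<open>\<rho> \<le> 1\<close> by (intro powr_mono) auto
  then have "real m \<le> real n" using n m(1) by simp
  then have parts: "0 < n div m" using m_pos by (simp add: div_greater_zero_iff)
  have p: "0 < ?p" "?p < 1" using n \<open>\<delta> < 1\<close> by (auto intro: powr_less_one)
  have "real (m ^ 2) * ?p = real n powr (2 * \<rho> + \<delta> - 1)"
    unfolding of_nat_power m(1) using n by (simp add: power2_eq_square powr_add[symmetric] add_diff_eq)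
  then have half: "1 / 2 \<le> (1 - ?p) ^ (m ^ 2)"
    using small1 p by (intro half_le_one_minus_power) auto
  have "real m * (1 / (?p powr (\<alpha> / 2) * real (n div m)))
      = real n powr \<rho> * real n powr \<rho> * real n powr (- ((\<delta> - 1) * (\<alpha> / 2))) / real n powr 1"
    using n m_pos m(2) by (simp add: m(1) real_of_nat_div powr_powr powr_minus field_simps)
  also have "\<dots> = real n powr (\<rho> + \<rho> + - ((\<delta> - 1) * (\<alpha> / 2)) - 1)"
    by (simp only: powr_add powr_diff)
  also have "\<dots> = real n powr (2 * \<rho> - 1 + (1 - \<delta>) * \<alpha> / 2)"
    by (rule arg_cong[where f = "\<lambda>e. real n powr e"]) (simp add: field_simps)
  finally have "(1 + 1 / (?p powr (\<alpha> / 2) * real (n div m))) ^ m \<le> 1 + 2 * \<epsilon>"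
    using power_one_plus_le[of "1 / (?p powr (\<alpha> / 2) * real (n div m))" m] small2
      \<open>\<epsilon> \<le> 1 / 2\<close> p by simp
  with parts p half show ?thesis unfolding moment_conditions_def by blast
qed

lemma eventually_powr_le:
  assumes "e < 0" "0 < c"
  shows "eventually (\<lambda>n. real n powr e \<le> c) sequentially"
  using order_tendstoD(2)[OF tendsto_neg_powr[OF assms(1) filterlim_real_sequentially] assms(2)]
  by (rule eventually_mono) simp

lemma eventually_moment_conditions:
  fixes \<delta> \<rho> \<alpha> \<epsilon> :: real
  assumes "0 < \<delta>" "0 < \<rho>" "0 < \<epsilon>" "\<epsilon> \<le> 1 / 2"
    and "2 * \<rho> + \<delta> - 1 < 0" "2 * \<rho> - 1 + (1 - \<delta>) * \<alpha> / 2 < 0"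
  shows "eventually (\<lambda>n. \<forall>m. real m = real n powr \<rho> \<and> m dvd n
           \<longrightarrow> moment_conditions n m (real n powr (\<delta> - 1)) \<alpha> \<epsilon>) sequentially"
proof -
  have "eventually (\<lambda>n. 1 < real n \<and> real n powr (2 * \<rho> + \<delta> - 1) \<le> 1 / 2
      \<and> real n powr (2 * \<rho> - 1 + (1 - \<delta>) * \<alpha> / 2) \<le> \<epsilon>) sequentially"
    using assms eventually_gt_at_top[of 1]
    by (intro eventually_conj eventually_powr_le) (auto elim: eventually_mono)
  moreover have "\<rho> \<le> 1" "\<delta> < 1" using assms by linarith+
  ultimately show ?thesis
    using moment_conditions_powr[of _ _ \<rho> \<delta> \<epsilon> \<alpha>] assms by (auto elim!: eventually_mono)
qed

theorem theoremC2:
  fixes \<delta> \<epsilon> \<alpha> \<rho> \<beta> :: real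
  assumes "0 < \<delta>" "\<delta> < 1" "0 < \<epsilon>" "\<epsilon> < 1/7"
    and "2 < \<alpha>" "\<alpha> < min (2 / (1 - \<delta>)) 3"
    and "0 < \<rho>" "\<rho> < min ((1 - \<delta>) / 2) ((2 - \<alpha> * (1 - \<delta>)) / 4)"
    and "0 \<le> \<beta>" "\<beta> < 1"
  shows "\<exists>N. \<forall>n \<ge> N. \<forall>(m::nat) (EH::nat set set) (k::nat) (k'::nat) (f::nat set set \<Rightarrow> bool).
     real m = real n powr \<rho> \<and> m dvd n \<and> balanced_graph m EH \<alpha> \<and> has_indep_set m EH k'
     \<and> k' \<le> k \<and> k \<le> n - m \<longrightarrow>
     measure_pmf.prob (GH_dist n (real n powr (\<delta> - 1)) m EH k k') {G. f G}
       \<ge> \<beta> * (measure_pmf.prob (AHG_dist n (real n powr (\<delta> - 1)) m EH k k') {G. f G}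
               - 4 * \<epsilon> / (1 - \<beta>)^2)"
proof -
  have "eventually (\<lambda>n. \<forall>m. real m = real n powr \<rho> \<and> m dvd n
      \<longrightarrow> moment_conditions n m (real n powr (\<delta> - 1)) \<alpha> \<epsilon>) sequentially"
    using assms by (intro eventually_moment_conditions) (simp_all add: field_simps)
  then obtain N where N: "\<forall>n \<ge> N. \<forall>m. real m = real n powr \<rho> \<and> m dvd n
      \<longrightarrow> moment_conditions n m (real n powr (\<delta> - 1)) \<alpha> \<epsilon>"
    unfolding eventually_sequentially by blast
  show ?thesis
  proof (intro exI[of _ N] allI impI)
    fix n m EH k k' and f :: "nat set set \<Rightarrow> bool"
    assume "N \<le> n" and H: "real m = real n powr \<rho> \<and> m dvd n \<and> balanced_graph m EH \<alpha>
      \<and> has_indep_set m EH k' \<and> k' \<le> k \<and> k \<le> n - m"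
    then have cond: "moment_conditions n m (real n powr (\<delta> - 1)) \<alpha> \<epsilon>" using N by blast
    from H have bal: "balanced_graph m EH \<alpha>" by blast
    show "\<beta> * (measure_pmf.prob (AHG_dist n (real n powr (\<delta> - 1)) m EH k k') {G. f G}
        - 4 * \<epsilon> / (1 - \<beta>)^2) \<le> measure_pmf.prob (GH_dist n (real n powr (\<delta> - 1)) m EH k k') {G. f G}"
      by (rule prob_GH_dist_ge[OF bal cond assms(9,10)])
  qed
qed

end
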